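(* Let $R$ be a commutative Bezout domain. The following are equivalent: (1) $R$ has stable range 1.5; (2) for every $n\times m$ matrix $A$ over $R$ with $\operatorname{rank}A>1$ there is a row $u=(1,u_2,\dots,u_n)$ over $R$ such that $uA=(b_1,\dots,b_m)$ where $(b_1,\dots,b_m)$ equals (up to a unit) the greatest common divisor of all entries of $A$.
   Context: A commutative Bezout domain is a commutative integral domain with $1\ne0$ in which every finitely generated ideal is principal. $R$ has stable range 1.5 if for all $a,b\in R$ and $c\in R\setminus\{0\}$ with $(a,b,c)=1$ there is $r\in R$ with $(a+br,c)=1$. The rank of a matrix is the largest order of a nonzero minor. *)

theory Defs
  imports "Jordan_Normal_Form.Determinant" "Jordan_Normal_Form.DL_Submatrix"
begin

definition gen_ideal :: "'a::comm_ring_1 set \<Rightarrow> 'a set" where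
  "gen_ideal S = {x. \<exists>f. x = (\<Sum>s\<in>S. f s * s)}"

definition bezout_domain :: "'a::idom itself \<Rightarrow> bool" where
  "bezout_domain _ \<longleftrightarrow>
     (\<forall>S::'a set. finite S \<longrightarrow> (\<exists>d. gen_ideal S = {d * r | r. True}))"

definition stable_range_15 :: "'a::comm_ring_1 itself \<Rightarrow> bool" where
  "stable_range_15 _ \<longleftrightarrow>
     (\<forall>a b c::'a. c \<noteq> 0 \<longrightarrow> 1 \<in> gen_ideal {a, b, c} \<longrightarrow>
        (\<exists>r. 1 \<in> gen_ideal {a + b * r, c}))"

definition is_gcd_of :: "'a::comm_ring_1 \<Rightarrow> 'a set \<Rightarrow> bool" where
  "is_gcd_of d S \<longleftrightarrow> (\<forall>s\<in>S. d dvd s) \<and> (\<forall>e. (\<forall>s\<in>S. e dvd s) \<longrightarrow> e dvd d)"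

definition minor_rank :: "'a::comm_ring_1 mat \<Rightarrow> nat" where
  "minor_rank A = Max {k. \<exists>I J. I \<subseteq> {..<dim_row A} \<and> J \<subseteq> {..<dim_col A} \<and>
       card I = k \<and> card J = k \<and> det (submatrix A I J) \<noteq> 0}"

definition entries :: "'a mat \<Rightarrow> 'a set" where
  "entries A = {A $$ (i, j) | i j. i < dim_row A \<and> j < dim_col A}"

definition row_times_mat :: "'a::comm_ring_1 vec \<Rightarrow> 'a mat \<Rightarrow> 'a vec" where
  "row_times_mat u A = vec (dim_col A) (\<lambda>j. \<Sum>i<dim_row A. u $ i * A $$ (i, j))"

end

theory Submission
  imports Defs
begin

(*
  In a Bezout domain the gcd of finitely many elements is a linear combination of them, so
  generating the unit ideal is the same as having no common non-unit divisor, and we argue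
  with divisors throughout.

  (1) implies (2). Dividing A by the gcd of its entries we may assume that the entries are
  coprime. The key step is a vector form of stable range 1.5: if the entries of two rows a, b
  together with c are coprime, and c is nonzero or a, b are linearly independent, then the
  entries of a + l b together with c are coprime for some l. To see this write a = g x with
  alpha x = 1 for some alpha, and b = beta x + y with alpha y = 0. Since
  g^2 = g (g + beta) - g beta, the elements g + beta, g beta and gcd(y, c) are coprime, and
  stable range 1.5 applied to them yields l. Applying the vector form to the rows one at a
  time, with c the gcd of the entries of a second row y, then perturbing the combination so
  that it is independent of y, and finally applying the vector form once more with c = 0 and
  b = y gives the required row u.

  (2) implies (1). Apply (2) to the matrix [[a, 0], [b, c]].
*)

section \<open>Coprime sets in Bezout domains\<close>

definition coprime_set :: "'a::comm_ring_1 set \<Rightarrow> bool" where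
  "coprime_set S \<longleftrightarrow> (\<forall>e. (\<forall>s\<in>S. e dvd s) \<longrightarrow> e dvd 1)"

lemma coprime_setI: "(\<And>e. (\<And>s. s \<in> S \<Longrightarrow> e dvd s) \<Longrightarrow> e dvd 1) \<Longrightarrow> coprime_set S"
  unfolding coprime_set_def by blast

lemma coprime_setD: "coprime_set S \<Longrightarrow> (\<And>s. s \<in> S \<Longrightarrow> e dvd s) \<Longrightarrow> e dvd 1"
  unfolding coprime_set_def by blast

lemma coprime_set_mono: "coprime_set S \<Longrightarrow> S \<subseteq> T \<Longrightarrow> coprime_set T"
  unfolding coprime_set_def by blast

lemma coprime_set_insert_0 [simp]: "coprime_set (insert 0 S) \<longleftrightarrow> coprime_set S"
  unfolding coprime_set_def by simp

lemma coprime_set_insert_add_mult: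
  "coprime_set (insert z ((\<lambda>k. f k + z * g k) ` K)) \<longleftrightarrow> coprime_set (insert z (f ` K))"
proof -
  have "(\<forall>s\<in>insert z ((\<lambda>k. f k + z * g k) ` K). e dvd s) \<longleftrightarrow> (\<forall>s\<in>insert z (f ` K). e dvd s)" for e
    by (auto simp: dvd_add_left_iff)
  then show ?thesis unfolding coprime_set_def by simp
qed

lemma coprime_set_if_lincomb_eq_1:
  assumes "(\<Sum>i\<in>I. \<alpha> i * x i) = 1"
  shows "coprime_set (x ` I)"
proof (rule coprime_setI)
  fix e assume "\<And>s. s \<in> x ` I \<Longrightarrow> e dvd s"
  then have "e dvd (\<Sum>i\<in>I. \<alpha> i * x i)" by (auto intro: dvd_sum)
  then show "e dvd 1" using assms by simp
qed

lemma is_gcd_of_factor: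
  assumes "\<And>i. i \<in> I \<Longrightarrow> v i = g * x i" and "(\<Sum>i\<in>I. \<alpha> i * x i) = 1"
  shows "is_gcd_of g (v ` I)"
  unfolding is_gcd_of_def
proof (intro conjI allI impI ballI)
  fix e assume "\<forall>s\<in>v ` I. e dvd s"
  then have "e dvd (\<Sum>i\<in>I. \<alpha> i * v i)" by (auto intro: dvd_sum)
  also have "(\<Sum>i\<in>I. \<alpha> i * v i) = g * (\<Sum>i\<in>I. \<alpha> i * x i)"
    by (simp add: assms(1) sum_distrib_left algebra_simps)
  finally show "e dvd g" using assms(2) by simp
qed (use assms(1) in auto)

lemma is_gcd_of_unit_iff: "is_gcd_of d S \<Longrightarrow> d dvd 1 \<longleftrightarrow> coprime_set S"
  unfolding is_gcd_of_def coprime_set_def by (meson dvd_trans)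

lemma gen_ideal_mem:
  assumes "finite S" "s \<in> S"
  shows "s \<in> gen_ideal S"
  unfolding gen_ideal_def
proof (intro CollectI exI)
  have "(\<Sum>x\<in>S. (if x = s then 1 else 0) * x) = (\<Sum>x\<in>S. if x = s then x else 0)"
    by (rule sum.cong) auto
  then show "s = (\<Sum>x\<in>S. (if x = s then 1 else 0) * x)" using assms by simp
qed

lemma gen_ideal_dvd: "x \<in> gen_ideal S \<Longrightarrow> (\<And>s. s \<in> S \<Longrightarrow> e dvd s) \<Longrightarrow> e dvd x"
  unfolding gen_ideal_def by (auto intro!: dvd_sum dvd_mult)

lemma gen_ideal_image_lincomb:
  assumes I: "finite I" and x: "x \<in> gen_ideal (v ` I)"
  shows "\<exists>\<mu>. x = (\<Sum>i\<in>I. \<mu> i * v i)"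
proof -
  obtain f where f: "x = (\<Sum>s\<in>v ` I. f s * s)" using x unfolding gen_ideal_def by blast
  define J where "J = inv_into I v ` v ` I"
  define \<mu> where "\<mu> i = (if i \<in> J then f (v i) else 0)" for i
  have J: "J \<subseteq> I" "inj_on (inv_into I v) (v ` I)"
    unfolding J_def by (auto simp: inv_into_into intro: inj_on_inv_into)
  have "x = (\<Sum>i\<in>J. f (v i) * v i)"
    unfolding f J_def by (subst sum.reindex[OF J(2)]) (simp add: f_inv_into_f)
  also have "\<dots> = (\<Sum>i\<in>I. \<mu> i * v i)"
    using I J(1) unfolding \<mu>_def by (intro sum.mono_neutral_cong_left) auto
  finally show ?thesis by blast
qed

lemma bezout_gcd_lincomb:
  fixes v :: "'i \<Rightarrow> 'a::idom"
  assumes bez: "bezout_domain TYPE('a)" and I: "finite I"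
  shows "\<exists>\<mu>. \<forall>i\<in>I. (\<Sum>j\<in>I. \<mu> j * v j) dvd v i"
proof -
  obtain d where d: "gen_ideal (v ` I) = {d * r | r. True}"
    using bez I unfolding bezout_domain_def by blast
  have "d \<in> gen_ideal (v ` I)" unfolding d by (auto intro: exI[of _ 1])
  then obtain \<mu> where \<mu>: "d = (\<Sum>i\<in>I. \<mu> i * v i)" using gen_ideal_image_lincomb[OF I] by blast
  have "d dvd v i" if "i \<in> I" for i
    using gen_ideal_mem[of "v ` I" "v i"] I that unfolding d by auto
  then show ?thesis unfolding \<mu> by blast
qed

lemma bezout_gcd_mult:
  fixes v :: "'i \<Rightarrow> 'a::idom"
  assumes bez: "bezout_domain TYPE('a)" and I: "finite I"
  shows "\<exists>d. (\<forall>i\<in>I. d dvd v i) \<and> (\<forall>e l. (\<forall>i\<in>I. e dvd l * v i) \<longrightarrow> e dvd l * d)"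
proof -
  obtain \<mu> where "\<forall>i\<in>I. (\<Sum>j\<in>I. \<mu> j * v j) dvd v i" using bezout_gcd_lincomb[OF bez I] by blast
  moreover have "e dvd l * (\<Sum>j\<in>I. \<mu> j * v j)" if "\<forall>i\<in>I. e dvd l * v i" for e l
  proof -
    have "e dvd (\<Sum>j\<in>I. \<mu> j * (l * v j))" using that by (blast intro: dvd_sum dvd_mult)
    then show ?thesis by (simp add: sum_distrib_left algebra_simps)
  qed
  ultimately show ?thesis by blast
qed

lemma bezout_coprime_set_lincomb:
  fixes v :: "'i \<Rightarrow> 'a::idom"
  assumes bez: "bezout_domain TYPE('a)" and I: "finite I" and cop: "coprime_set (v ` I)"
  shows "\<exists>\<mu>. (\<Sum>i\<in>I. \<mu> i * v i) = 1"
proof -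
  obtain \<mu> where "\<forall>i\<in>I. (\<Sum>j\<in>I. \<mu> j * v j) dvd v i" using bezout_gcd_lincomb[OF bez I] by blast
  then have "(\<Sum>j\<in>I. \<mu> j * v j) dvd 1" using cop by (auto intro: coprime_setD)
  then obtain w where "1 = (\<Sum>j\<in>I. \<mu> j * v j) * w" by (rule dvdE)
  have "(\<Sum>i\<in>I. (w * \<mu> i) * v i) = w * (\<Sum>j\<in>I. \<mu> j * v j)"
    by (simp add: sum_distrib_left mult.assoc)
  also have "\<dots> = 1" using \<open>1 = _\<close> by (simp add: mult.commute)
  finally show ?thesis by (auto intro!: exI[of _ "\<lambda>i. w * \<mu> i"])
qed

lemma bezout_coprime_set3_lincomb:
  fixes a b c :: "'a::idom"
  assumes bez: "bezout_domain TYPE('a)" and cop: "coprime_set {a, b, c}"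
  shows "\<exists>p q r. p * a + q * b + r * c = 1"
proof -
  define v where "v i = (if i = 0 then a else if i = 1 then b else c)" for i :: nat
  have "v ` {0, 1, 2} = {a, b, c}" unfolding v_def by auto
  then obtain \<mu> where "(\<Sum>i\<in>{0, 1, 2}. \<mu> i * v i) = 1"
    using bezout_coprime_set_lincomb[OF bez, of "{0, 1, 2}" v] cop by auto
  then have "\<mu> 0 * a + \<mu> 1 * b + \<mu> 2 * c = 1" unfolding v_def by (simp add: add.assoc)
  then show ?thesis by blast
qed

lemma bezout_coprime_set2_lincomb:
  fixes a b :: "'a::idom"
  assumes bez: "bezout_domain TYPE('a)" and cop: "coprime_set {a, b}"
  shows "\<exists>p q. p * a + q * b = 1"
proof -
  obtain p q r where "p * a + q * b + r * b = 1"
    using bezout_coprime_set3_lincomb[OF bez, of a b b] cop by auto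
  then have "p * a + (q + r) * b = 1" by (simp add: algebra_simps)
  then show ?thesis by blast
qed

lemma bezout_primitive_factor:
  fixes v :: "'i \<Rightarrow> 'a::idom"
  assumes bez: "bezout_domain TYPE('a)" and I: "finite I" and nz: "i0 \<in> I" "v i0 \<noteq> 0"
  shows "\<exists>g x \<alpha>. (\<forall>i\<in>I. v i = g * x i) \<and> (\<Sum>i\<in>I. \<alpha> i * x i) = 1"
proof -
  obtain \<alpha> where \<alpha>: "\<forall>i\<in>I. (\<Sum>j\<in>I. \<alpha> j * v j) dvd v i" using bezout_gcd_lincomb[OF bez I] by blast
  define g where "g = (\<Sum>j\<in>I. \<alpha> j * v j)"
  have "\<forall>i\<in>I. \<exists>q. v i = g * q" using \<alpha> unfolding g_def by (auto elim: dvdE)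
  then obtain x where x: "\<forall>i\<in>I. v i = g * x i" by metis
  have g: "g \<noteq> 0" using x nz by auto
  have "g * (\<Sum>i\<in>I. \<alpha> i * x i) = (\<Sum>i\<in>I. \<alpha> i * v i)"
    unfolding sum_distrib_left by (rule sum.cong) (simp_all add: x algebra_simps)
  then have "g * (\<Sum>i\<in>I. \<alpha> i * x i) = g * 1" unfolding g_def by simp
  then have "(\<Sum>i\<in>I. \<alpha> i * x i) = 1" using g by simp
  with x show ?thesis by blast
qed

lemma bezout_one_in_gen_ideal_iff:
  fixes S :: "'a::idom set"
  assumes bez: "bezout_domain TYPE('a)" and S: "finite S"
  shows "1 \<in> gen_ideal S \<longleftrightarrow> coprime_set S"
proof
  assume "1 \<in> gen_ideal S"
  then show "coprime_set S" by (auto intro: coprime_setI gen_ideal_dvd)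
next
  assume cop: "coprime_set S"
  obtain d where d: "gen_ideal S = {d * r | r. True}" using bez S unfolding bezout_domain_def by blast
  have "d dvd s" if "s \<in> S" for s
    using gen_ideal_mem[OF S that] unfolding d by auto
  then have "d dvd 1" using cop by (rule coprime_setD[rotated])
  then obtain r where "1 = d * r" by (rule dvdE)
  then show "1 \<in> gen_ideal S" unfolding d by auto
qed

section \<open>Stable range 1.5 for rows\<close>

lemma bezout_stable_range_15_iff:
  assumes "bezout_domain TYPE('a::idom)"
  shows "stable_range_15 TYPE('a) \<longleftrightarrow>
    (\<forall>a b c::'a. c \<noteq> 0 \<longrightarrow> coprime_set {a, b, c} \<longrightarrow> (\<exists>r. coprime_set {a + b * r, c}))"
  unfolding stable_range_15_def by (simp add: bezout_one_in_gen_ideal_iff[OF assms])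

lemma coprime_set_sum_prod:
  fixes a b c :: "'a::comm_ring_1"
  assumes "p * a + q * b + r * c = 1"
  shows "coprime_set {a + b, a * b, c}"
proof (rule coprime_setI)
  fix e assume "\<And>s. s \<in> {a + b, a * b, c} \<Longrightarrow> e dvd s"
  then have e: "e dvd a + b" "e dvd a * b" "e dvd c" by auto
  have "1 = (p * a + q * b + r * c)\<^sup>2" using assms by simp
  also have "\<dots> = p\<^sup>2 * (a * (a + b) - a * b) + 2 * p * q * (a * b) + q\<^sup>2 * (b * (a + b) - a * b)
      + c * (r * (2 * p * a + 2 * q * b + r * c))"
    by (simp add: power2_eq_square algebra_simps)
  finally show "e dvd 1"
    using e by (metis dvd_add dvd_diff dvd_mult dvd_mult2)
qed

lemma stable_range_15_scaled:
  fixes g \<beta> c :: "'a::idom"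
  assumes bez: "bezout_domain TYPE('a)" and sr: "stable_range_15 TYPE('a)"
    and c: "c \<noteq> 0" and cop: "coprime_set {g, \<beta>, c}"
  shows "\<exists>l. coprime_set {g + l * \<beta>, l * c}"
proof -
  obtain p q r where "p * g + q * \<beta> + r * c = 1" using bezout_coprime_set3_lincomb[OF bez cop] by blast
  then have "coprime_set {g + \<beta>, g * \<beta>, c}" by (rule coprime_set_sum_prod)
  then have "\<exists>s. coprime_set {(g + \<beta>) + (g * \<beta>) * s, c}"
    using sr c unfolding bezout_stable_range_15_iff[OF bez] by blast
  then obtain s where "coprime_set {g + \<beta> + g * \<beta> * s, c}" by blast
  then obtain \<sigma> \<tau> where st: "\<sigma> * (g + \<beta> + g * \<beta> * s) + \<tau> * c = 1"
    using bezout_coprime_set2_lincomb[OF bez] by blast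
  define l where "l = 1 + s * g"
  \<comment> \<open>\<open>l * (1 + s * \<beta>) = 1 + s * (g + l * \<beta>)\<close>, so \<open>l\<close> is invertible modulo \<open>g + l * \<beta>\<close>\<close>
  have "(\<sigma> - \<tau> * c * s) * (g + l * \<beta>) + (\<tau> * (1 + s * \<beta>)) * (l * c) = \<sigma> * (g + \<beta> + g * \<beta> * s) + \<tau> * c"
    unfolding l_def by (simp add: algebra_simps)
  then have one: "(\<sigma> - \<tau> * c * s) * (g + l * \<beta>) + (\<tau> * (1 + s * \<beta>)) * (l * c) = 1"
    using st by simp
  have "coprime_set {g + l * \<beta>, l * c}"
  proof (rule coprime_setI)
    fix e assume "\<And>x. x \<in> {g + l * \<beta>, l * c} \<Longrightarrow> e dvd x"
    then have "e dvd (\<sigma> - \<tau> * c * s) * (g + l * \<beta>) + (\<tau> * (1 + s * \<beta>)) * (l * c)" by simp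
    then show "e dvd 1" unfolding one .
  qed
  then show ?thesis by blast
qed

lemma coprime_set_insert_decomposed:
  assumes split: "\<And>k. k \<in> K \<Longrightarrow> w k = X * x k + l * y k"
    and \<alpha>x: "(\<Sum>k\<in>K. \<alpha> k * x k) = 1" and \<alpha>y: "(\<Sum>k\<in>K. \<alpha> k * y k) = 0"
    and d: "\<And>e. \<forall>t\<in>insert c (y ` K). e dvd l * t \<Longrightarrow> e dvd l * d"
    and cop: "coprime_set {X, l * d}"
  shows "coprime_set (insert c (w ` K))"
proof (rule coprime_setI)
  fix e assume "\<And>s. s \<in> insert c (w ` K) \<Longrightarrow> e dvd s"
  then have ec: "e dvd c" and ew: "\<And>k. k \<in> K \<Longrightarrow> e dvd w k" by auto
  have "(\<Sum>k\<in>K. \<alpha> k * w k) = X * (\<Sum>k\<in>K. \<alpha> k * x k) + l * (\<Sum>k\<in>K. \<alpha> k * y k)"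
    by (simp add: split sum_distrib_left sum.distrib algebra_simps cong: sum.cong)
  then have "(\<Sum>k\<in>K. \<alpha> k * w k) = X" using \<alpha>x \<alpha>y by simp
  moreover have "e dvd (\<Sum>k\<in>K. \<alpha> k * w k)" using ew by (auto intro: dvd_sum)
  ultimately have eX: "e dvd X" by simp
  have "e dvd l * y k" if "k \<in> K" for k
    using dvd_diff[OF ew[OF that] dvd_mult2[OF eX, of "x k"]] split[OF that] by simp
  then have "e dvd l * d" using ec by (intro d) auto
  with eX show "e dvd 1" using cop by (auto intro: coprime_setD)
qed

lemma bezout_decompose_pair:
  fixes a b :: "'i \<Rightarrow> 'a::idom"
  assumes bez: "bezout_domain TYPE('a)" and K: "finite K" and nz: "k0 \<in> K" "a k0 \<noteq> 0"
  shows "\<exists>g x \<alpha> \<beta> y. (\<forall>k\<in>K. a k = g * x k \<and> b k = \<beta> * x k + y k) \<and>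
    (\<Sum>k\<in>K. \<alpha> k * x k) = 1 \<and> (\<Sum>k\<in>K. \<alpha> k * y k) = 0"
proof -
  obtain g x \<alpha> where ax: "\<forall>k\<in>K. a k = g * x k" and \<alpha>x: "(\<Sum>k\<in>K. \<alpha> k * x k) = 1"
    using bezout_primitive_factor[where v = a, OF bez K nz] by blast
  define \<beta> where "\<beta> = (\<Sum>k\<in>K. \<alpha> k * b k)"
  define y where "y k = b k - \<beta> * x k" for k
  have "(\<Sum>k\<in>K. \<alpha> k * y k) = (\<Sum>k\<in>K. \<alpha> k * b k) - \<beta> * (\<Sum>k\<in>K. \<alpha> k * x k)"
    unfolding y_def by (simp add: algebra_simps sum_subtractf sum_distrib_left)
  then have "(\<Sum>k\<in>K. \<alpha> k * y k) = 0" using \<alpha>x unfolding \<beta>_def by simp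
  moreover have "\<forall>k\<in>K. a k = g * x k \<and> b k = \<beta> * x k + y k" using ax unfolding y_def by simp
  ultimately show ?thesis using \<alpha>x by blast
qed

lemma stable_range_15_vector:
  fixes a b :: "'i \<Rightarrow> 'a::idom"
  assumes bez: "bezout_domain TYPE('a)" and sr: "stable_range_15 TYPE('a)" and K: "finite K"
    and indep: "c \<noteq> 0 \<or> (\<exists>k\<in>K. \<exists>l\<in>K. a k * b l \<noteq> a l * b k)"
    and cop: "coprime_set (insert c (a ` K \<union> b ` K))"
  shows "\<exists>l. coprime_set (insert c ((\<lambda>k. a k + l * b k) ` K))"
proof (cases "\<forall>k\<in>K. a k = 0")
  case True
  then have "coprime_set (insert c ((\<lambda>k. a k + 1 * b k) ` K))"
    using cop by (auto simp: coprime_set_def)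
  then show ?thesis by blast
next
  case False
  then obtain g x \<alpha> \<beta> y where ab: "\<forall>k\<in>K. a k = g * x k \<and> b k = \<beta> * x k + y k"
    and \<alpha>x: "(\<Sum>k\<in>K. \<alpha> k * x k) = 1" and \<alpha>y: "(\<Sum>k\<in>K. \<alpha> k * y k) = 0"
    using bezout_decompose_pair[OF bez K] by blast
  obtain d where d_dvd: "\<forall>t\<in>insert c (y ` K). d dvd t"
    and d_gcd: "\<And>e l. \<forall>t\<in>insert c (y ` K). e dvd l * t \<Longrightarrow> e dvd l * d"
    using bezout_gcd_mult[OF bez, of "insert c (y ` K)" id] K by auto
  have "d \<noteq> 0"
  proof
    assume "d = 0"
    then have "c = 0" and "\<And>k. k \<in> K \<Longrightarrow> b k = \<beta> * x k" using d_dvd ab by auto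
    then show False using indep ab by (auto simp: algebra_simps)
  qed
  have "coprime_set {g, \<beta>, d}"
  proof (rule coprime_setI)
    fix e assume "\<And>s. s \<in> {g, \<beta>, d} \<Longrightarrow> e dvd s"
    then have e: "e dvd g" "e dvd \<beta>" "e dvd d" by auto
    then have "e dvd c" "\<And>k. k \<in> K \<Longrightarrow> e dvd y k" using d_dvd by (auto intro: dvd_trans)
    with e ab show "e dvd 1" by (intro coprime_setD[OF cop]) auto
  qed
  then obtain l where "coprime_set {g + l * \<beta>, l * d}"
    using stable_range_15_scaled[OF bez sr \<open>d \<noteq> 0\<close>] by blast
  moreover have "a k + l * b k = (g + l * \<beta>) * x k + l * y k" if "k \<in> K" for k
    using ab that by (simp add: algebra_simps)
  ultimately have "coprime_set (insert c ((\<lambda>k. a k + l * b k) ` K))"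
    using \<alpha>x \<alpha>y d_gcd by (intro coprime_set_insert_decomposed) auto
  then show ?thesis by blast
qed

lemma stable_range_15_rows:
  fixes a :: "'i \<Rightarrow> 'a::idom" and F :: "'j \<Rightarrow> 'i \<Rightarrow> 'a"
  assumes bez: "bezout_domain TYPE('a)" and sr: "stable_range_15 TYPE('a)" and K: "finite K"
    and P: "finite P"
  shows "c \<noteq> 0 \<Longrightarrow> coprime_set (insert c (a ` K \<union> (\<Union>j\<in>P. F j ` K))) \<Longrightarrow>
    \<exists>t. coprime_set (insert c ((\<lambda>k. a k + (\<Sum>j\<in>P. t j * F j k)) ` K))"
  using P
proof (induction P arbitrary: c rule: finite_induct)
  case empty
  then show ?case by simp
next
  case (insert j P)
  obtain c' where c'_dvd: "\<forall>t\<in>insert c (F j ` K). c' dvd t"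
    and c'_gcd: "\<And>e l. \<forall>t\<in>insert c (F j ` K). e dvd l * t \<Longrightarrow> e dvd l * c'"
    using bezout_gcd_mult[OF bez, of "insert c (F j ` K)" id] K by auto
  have "c' \<noteq> 0" using c'_dvd insert.prems(1) by auto
  moreover have "coprime_set (insert c' (a ` K \<union> (\<Union>j\<in>P. F j ` K)))"
  proof (rule coprime_setI)
    fix e assume e: "\<And>s. s \<in> insert c' (a ` K \<union> (\<Union>j\<in>P. F j ` K)) \<Longrightarrow> e dvd s"
    then have "e dvd c" "\<And>k. k \<in> K \<Longrightarrow> e dvd F j k"
      using c'_dvd by (auto intro: dvd_trans)
    show "e dvd 1"
    proof (rule coprime_setD[OF insert.prems(2)])
      fix s assume "s \<in> insert c (a ` K \<union> (\<Union>i\<in>insert j P. F i ` K))"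
      then show "e dvd s" using e \<open>e dvd c\<close> \<open>\<And>k. k \<in> K \<Longrightarrow> e dvd F j k\<close> by blast
    qed
  qed
  ultimately obtain t where t: "coprime_set (insert c' ((\<lambda>k. a k + (\<Sum>j\<in>P. t j * F j k)) ` K))"
    using insert.IH by blast
  define a' where "a' k = a k + (\<Sum>j\<in>P. t j * F j k)" for k
  have "coprime_set (insert c (a' ` K \<union> F j ` K))"
  proof (rule coprime_setI)
    fix e assume e: "\<And>s. s \<in> insert c (a' ` K \<union> F j ` K) \<Longrightarrow> e dvd s"
    then have "e dvd c'" using c'_gcd[of e 1] by simp
    with e show "e dvd 1" using t unfolding a'_def by (auto intro: coprime_setD)
  qed
  then obtain l where l: "coprime_set (insert c ((\<lambda>k. a' k + l * F j k) ` K))"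
    using stable_range_15_vector[OF bez sr K] insert.prems(1) by blast
  have "a k + (\<Sum>i\<in>insert j P. (t(j := l)) i * F i k) = a' k + l * F j k" for k
  proof -
    have "(\<Sum>i\<in>P. (t(j := l)) i * F i k) = (\<Sum>i\<in>P. t i * F i k)"
      using insert.hyps(2) by (intro sum.cong) auto
    then show ?thesis unfolding a'_def using insert.hyps by (simp add: algebra_simps)
  qed
  then show ?case using l by (intro exI[of _ "t(j := l)"]) simp
qed

lemma stable_range_15_first_row_combination:
  fixes F :: "nat \<Rightarrow> 'i \<Rightarrow> 'a::idom"
  assumes bez: "bezout_domain TYPE('a)" and sr: "stable_range_15 TYPE('a)" and K: "finite K"
    and z: "z \<noteq> 0" and n: "0 < n" and cop: "coprime_set ((\<lambda>(i, k). F i k) ` ({..<n} \<times> K))"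
  shows "\<exists>u. u 0 = 1 \<and> coprime_set (insert z ((\<lambda>k. \<Sum>i<n. u i * F i k) ` K))"
proof -
  have "(\<lambda>(i, k). F i k) ` ({..<n} \<times> K) \<subseteq> insert z (F 0 ` K \<union> (\<Union>i\<in>{1..<n}. F i ` K))"
  proof
    fix x assume "x \<in> (\<lambda>(i, k). F i k) ` ({..<n} \<times> K)"
    then obtain i k where "i < n" "k \<in> K" "x = F i k" by auto
    then show "x \<in> insert z (F 0 ` K \<union> (\<Union>i\<in>{1..<n}. F i ` K))" by (cases "i = 0") auto
  qed
  then obtain t where t: "coprime_set (insert z ((\<lambda>k. F 0 k + (\<Sum>i\<in>{1..<n}. t i * F i k)) ` K))"
    using stable_range_15_rows[OF bez sr K] z coprime_set_mono[OF cop] by blast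
  have "(\<Sum>i<n. (t(0 := 1)) i * F i k) = F 0 k + (\<Sum>i\<in>{1..<n}. t i * F i k)" for k
  proof -
    have "(\<Sum>i<n. (t(0 := 1)) i * F i k) = F 0 k + (\<Sum>i\<in>{1..<n}. (t(0 := 1)) i * F i k)"
      using n by (simp add: lessThan_atLeast0 sum.atLeast_Suc_lessThan)
    then show ?thesis by simp
  qed
  then show ?thesis using t by (intro exI[of _ "t(0 := 1)"]) simp
qed

lemma sum_mult_fun_upd_add:
  fixes u f :: "'i \<Rightarrow> 'a::comm_semiring_1"
  assumes "finite I" "i \<in> I"
  shows "(\<Sum>j\<in>I. (u(i := u i + z)) j * f j) = (\<Sum>j\<in>I. u j * f j) + z * f i"
proof -
  have "(\<Sum>j\<in>I. (u(i := u i + z)) j * f j) = (\<Sum>j\<in>I. u j * f j + (if j = i then z * f i else 0))"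
    by (rule sum.cong) (auto simp: algebra_simps)
  then show ?thesis using assms by (simp add: sum.distrib)
qed

lemma exists_shift_nonzero_minor:
  fixes F :: "nat \<Rightarrow> 'i \<Rightarrow> 'a::idom"
  assumes r: "r < n" "F r k * y l \<noteq> F r l * y k" and z: "z \<noteq> 0" and u: "u 0 = 1"
    and cop: "coprime_set (insert z ((\<lambda>k'. \<Sum>i<n. u i * F i k') ` K))"
  shows "\<exists>u'. u' 0 = 1 \<and> coprime_set (insert z ((\<lambda>k'. \<Sum>i<n. u' i * F i k') ` K)) \<and>
    (\<Sum>i<n. u' i * F i k) * y l \<noteq> (\<Sum>i<n. u' i * F i l) * y k"
proof -
  define m where "m i = F i k * y l - F i l * y k" for i
  have minor: "(\<Sum>i<n. v i * F i k) * y l - (\<Sum>i<n. v i * F i l) * y k = (\<Sum>i<n. v i * m i)" for v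
  proof -
    have "(\<Sum>i<n. v i * F i k) * y l - (\<Sum>i<n. v i * F i l) * y k
        = (\<Sum>i<n. v i * F i k * y l - v i * F i l * y k)"
      by (simp add: sum_distrib_right sum_subtractf)
    also have "\<dots> = (\<Sum>i<n. v i * m i)" unfolding m_def by (simp add: algebra_simps)
    finally show ?thesis .
  qed
  show ?thesis
  proof (cases "(\<Sum>i<n. u i * m i) = 0")
    case False
    then have "(\<Sum>i<n. u i * F i k) * y l \<noteq> (\<Sum>i<n. u i * F i l) * y k" using minor[of u] by auto
    then show ?thesis using u cop by blast
  next
    case True
    have "\<exists>i<n. i \<noteq> 0 \<and> m i \<noteq> 0"
    proof (rule ccontr)
      assume "\<not> ?thesis"
      then have "(\<Sum>i<n. u i * m i) = (\<Sum>i<n. if i = 0 then m i else 0)"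
        using u by (intro sum.cong) auto
      then have "m 0 = 0" using True r(1) by simp
      with \<open>\<not> ?thesis\<close> have "m r = 0" using r(1) by (cases "r = 0") auto
      then show False using r(2) unfolding m_def by simp
    qed
    then obtain i where i: "i < n" "i \<noteq> 0" "m i \<noteq> 0" by blast
    define u' where "u' = u(i := u i + z)"
    have shift: "(\<lambda>k'. \<Sum>j<n. u' j * F j k') = (\<lambda>k'. (\<Sum>j<n. u j * F j k') + z * F i k')"
      unfolding u'_def using i(1) by (intro ext sum_mult_fun_upd_add) auto
    have "coprime_set (insert z ((\<lambda>k'. \<Sum>j<n. u' j * F j k') ` K))"
      unfolding shift coprime_set_insert_add_mult by (rule cop)
    moreover have "(\<Sum>j<n. u' j * m j) = (\<Sum>j<n. u j * m j) + z * m i"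
      unfolding u'_def using i(1) by (intro sum_mult_fun_upd_add) auto
    then have "(\<Sum>j<n. u' j * m j) \<noteq> 0" using True i(3) z by simp
    then have "(\<Sum>j<n. u' j * F j k) * y l \<noteq> (\<Sum>j<n. u' j * F j l) * y k" using minor[of u'] by auto
    moreover have "u' 0 = 1" using i(2) u unfolding u'_def by simp
    ultimately show ?thesis by blast
  qed
qed

lemma stable_range_15_row_combination:
  fixes F :: "nat \<Rightarrow> 'i \<Rightarrow> 'a::idom"
  assumes bez: "bezout_domain TYPE('a)" and sr: "stable_range_15 TYPE('a)" and K: "finite K"
    and cop: "coprime_set ((\<lambda>(i, k). F i k) ` ({..<n} \<times> K))"
    and minor: "i1 < n" "i2 < n" "j1 \<in> K" "j2 \<in> K" "F i1 j1 * F i2 j2 \<noteq> F i1 j2 * F i2 j1"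
  shows "\<exists>u. u 0 = 1 \<and> coprime_set ((\<lambda>k. \<Sum>i<n. u i * F i k) ` K)"
proof -
  obtain r s k l where rs: "r < n" "s < n" "s \<noteq> 0" "k \<in> K" "l \<in> K" "F r k * F s l \<noteq> F r l * F s k"
  proof (cases "i2 = 0")
    case True
    have "i1 \<noteq> 0"
    proof
      assume "i1 = 0"
      then show False using True minor(5) by (simp add: mult.commute)
    qed
    moreover have "F i2 j2 * F i1 j1 \<noteq> F i2 j1 * F i1 j2" using minor(5) by (simp add: mult.commute)
    ultimately show ?thesis using that[of i2 i1 j2 j1] minor by blast
  qed (use that minor in blast)
  define comb where "comb u = (\<lambda>k'. \<Sum>i<n. u i * F i k')" for u
  obtain z where z_dvd: "\<forall>k'\<in>K. z dvd F s k'"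
    and z_gcd: "\<And>e l. \<forall>k'\<in>K. e dvd l * F s k' \<Longrightarrow> e dvd l * z"
    using bezout_gcd_mult[OF bez K] by blast
  have "z \<noteq> 0" using z_dvd rs by auto
  obtain u where "u 0 = 1" "coprime_set (insert z (comb u ` K))"
    using stable_range_15_first_row_combination[OF bez sr K \<open>z \<noteq> 0\<close> _ cop] rs(2)
    unfolding comb_def by auto
  then obtain u' where u': "u' 0 = 1" "coprime_set (insert z (comb u' ` K))"
    "comb u' k * F s l \<noteq> comb u' l * F s k"
    using exists_shift_nonzero_minor[where F = F and y = "F s" and u = u, OF rs(1,6) \<open>z \<noteq> 0\<close>]
    unfolding comb_def by blast
  have "coprime_set (insert 0 (comb u' ` K \<union> F s ` K))"
  proof (rule coprime_setI)
    fix e assume e: "\<And>x. x \<in> insert 0 (comb u' ` K \<union> F s ` K) \<Longrightarrow> e dvd x"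
    then have "e dvd z" using z_gcd[of e 1] by simp
    with e show "e dvd 1" by (intro coprime_setD[OF u'(2)]) auto
  qed
  then obtain q where q: "coprime_set (insert 0 ((\<lambda>k'. comb u' k' + q * F s k') ` K))"
    using stable_range_15_vector[OF bez sr K] u'(3) rs(4,5) by blast
  define v where "v = u'(s := u' s + q)"
  have "comb v = (\<lambda>k'. comb u' k' + q * F s k')"
    unfolding comb_def v_def using rs(2) by (intro ext sum_mult_fun_upd_add) auto
  then have "coprime_set (comb v ` K)" using q by simp
  moreover have "v 0 = 1" using u'(1) rs(3) unfolding v_def by simp
  ultimately show ?thesis unfolding comb_def by blast
qed

section \<open>Rank and 2-by-2 minors\<close>

lemma det_zero_row:
  assumes A: "A \<in> carrier_mat n n" and i: "i < n" and zero: "\<And>j. j < n \<Longrightarrow> A $$ (i, j) = 0"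
  shows "det A = 0"
proof -
  have "multrow i 0 A = A" by (rule eq_matI) (use A zero in auto)
  moreover have "det (multrow i 0 A) = 0 * det A" by (rule det_multrow[OF i A])
  ultimately show ?thesis by simp
qed

lemma det_zero_if_2x2_minors_zero:
  fixes B :: "'a::idom mat"
  assumes B: "B \<in> carrier_mat n n" and n: "2 \<le> n"
    and minors: "\<And>i1 i2 j1 j2. i1 < n \<Longrightarrow> i2 < n \<Longrightarrow> j1 < n \<Longrightarrow> j2 < n \<Longrightarrow>
       B $$ (i1, j1) * B $$ (i2, j2) = B $$ (i1, j2) * B $$ (i2, j1)"
  shows "det B = 0"
proof (cases "\<forall>j<n. B $$ (0, j) = 0")
  case True
  then show ?thesis using det_zero_row[OF B, of 0] n by auto
next
  case False
  then obtain q where q: "q < n" "B $$ (0, q) \<noteq> 0" by auto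
  define D where "D = addrow (- B $$ (1, q)) 1 0 (multrow 1 (B $$ (0, q)) B)"
  have D: "D \<in> carrier_mat n n" unfolding D_def using B by auto
  have M: "multrow 1 (B $$ (0, q)) B \<in> carrier_mat n n" using B by simp
  have "det D = det (multrow 1 (B $$ (0, q)) B)"
    unfolding D_def by (rule det_addrow[OF _ _ M]) (use n in auto)
  also have "\<dots> = B $$ (0, q) * det B" by (rule det_multrow[OF _ B]) (use n in auto)
  finally have "det D = B $$ (0, q) * det B" .
  moreover have "det D = 0"
  proof (rule det_zero_row[OF D])
    fix j assume "j < n"
    then show "D $$ (1, j) = 0"
      using B n minors[of 0 1 q j] q unfolding D_def by (auto simp: algebra_simps)
  qed (use n in auto)
  ultimately show ?thesis using q by simp
qed

lemma finite_minor_orders: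
  "finite {k. \<exists>I J. I \<subseteq> {..<dim_row A} \<and> J \<subseteq> {..<dim_col A} \<and>
     card I = k \<and> card J = k \<and> det (submatrix A I J) \<noteq> 0}"
  by (rule finite_subset[of _ "{..dim_row A}"]) (auto dest: card_mono[rotated])

lemma minor_rank_ge:
  assumes "I \<subseteq> {..<dim_row A}" "J \<subseteq> {..<dim_col A}" "card I = k" "card J = k"
    and "det (submatrix A I J) \<noteq> 0"
  shows "k \<le> minor_rank A"
  unfolding minor_rank_def by (rule Max_ge[OF finite_minor_orders]) (use assms in blast)

lemma minor_rank_attained:
  obtains I J where "I \<subseteq> {..<dim_row A}" "J \<subseteq> {..<dim_col A}"
    "card I = minor_rank A" "card J = minor_rank A" "det (submatrix A I J) \<noteq> 0"
proof -
  have "submatrix A {} {} \<in> carrier_mat 0 0" unfolding submatrix_def by auto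
  then have "0 \<in> {k. \<exists>I J. I \<subseteq> {..<dim_row A} \<and> J \<subseteq> {..<dim_col A} \<and>
     card I = k \<and> card J = k \<and> det (submatrix A I J) \<noteq> 0}"
    by (intro CollectI exI[of _ "{}"]) simp
  then have "minor_rank A \<in> {k. \<exists>I J. I \<subseteq> {..<dim_row A} \<and> J \<subseteq> {..<dim_col A} \<and>
     card I = k \<and> card J = k \<and> det (submatrix A I J) \<noteq> 0}"
    unfolding minor_rank_def by (intro Max_in[OF finite_minor_orders]) blast
  then show ?thesis using that by blast
qed

lemma submatrix_full: "submatrix A {..<dim_row A} {..<dim_col A} = A"
proof (rule eq_matI)
  have pick: "pick {..<k} i = i" if "i < k" for i k
  proof -
    have "pick {..<k} (card {a\<in>{..<k}. a < i}) = i" using that by (intro pick_card_in_set) simp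
    moreover have "{a\<in>{..<k}. a < i} = {..<i}" using that by auto
    ultimately show ?thesis by simp
  qed
  fix i j assume "i < dim_row A" "j < dim_col A"
  then show "submatrix A {..<dim_row A} {..<dim_col A} $$ (i, j) = A $$ (i, j)"
    by (simp add: submatrix_index pick)
qed (simp_all add: dim_submatrix)

lemma minor_rank_ge_dim:
  assumes "A \<in> carrier_mat n n" and "det A \<noteq> 0"
  shows "n \<le> minor_rank A"
  using minor_rank_ge[of "{..<n}" A "{..<n}" n] submatrix_full[of A] assms by auto

lemma minor_rank_gt_1_imp_2x2_minor:
  fixes A :: "'a::idom mat"
  assumes "1 < minor_rank A"
  shows "\<exists>i1 i2 j1 j2. i1 < dim_row A \<and> i2 < dim_row A \<and> j1 < dim_col A \<and> j2 < dim_col A \<and>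
     A $$ (i1, j1) * A $$ (i2, j2) \<noteq> A $$ (i1, j2) * A $$ (i2, j1)"
proof (rule ccontr)
  assume no_minor: "\<not> ?thesis"
  obtain I J where IJ: "I \<subseteq> {..<dim_row A}" "J \<subseteq> {..<dim_col A}"
    "card I = minor_rank A" "card J = minor_rank A" "det (submatrix A I J) \<noteq> 0"
    by (rule minor_rank_attained)
  have rows: "{i. i < dim_row A \<and> i \<in> I} = I" and cols: "{j. j < dim_col A \<and> j \<in> J} = J"
    using IJ by auto
  have B: "submatrix A I J \<in> carrier_mat (minor_rank A) (minor_rank A)"
    by (rule carrier_matI) (simp_all add: dim_submatrix rows cols IJ(3,4))
  have "det (submatrix A I J) = 0"
  proof (rule det_zero_if_2x2_minors_zero[OF B])
    fix i1 i2 j1 j2 assume ij: "i1 < minor_rank A" "i2 < minor_rank A" "j1 < minor_rank A" "j2 < minor_rank A"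
    have entry: "submatrix A I J $$ (i, j) = A $$ (pick I i, pick J j)"
      if "i < minor_rank A" "j < minor_rank A" for i j
      using that IJ by (simp add: submatrix_index rows cols)
    have pick: "pick I i < dim_row A" "pick J j < dim_col A"
      if "i < minor_rank A" "j < minor_rank A" for i j
      using that IJ pick_in_set[of i I] pick_in_set[of j J] by auto
    show "submatrix A I J $$ (i1, j1) * submatrix A I J $$ (i2, j2) =
          submatrix A I J $$ (i1, j2) * submatrix A I J $$ (i2, j1)"
      unfolding entry[OF ij(1,3)] entry[OF ij(2,4)] entry[OF ij(1,4)] entry[OF ij(2,3)]
      using no_minor pick[OF ij(1,3)] pick[OF ij(2,4)] by blast
  qed (use assms in simp)
  with IJ(5) show False by contradiction
qed

lemma entries_eq_image: "entries A = (\<lambda>(i, j). A $$ (i, j)) ` ({..<dim_row A} \<times> {..<dim_col A})"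
  unfolding entries_def by auto

lemma matrix_gcd_factor:
  fixes A :: "'a::idom mat"
  assumes bez: "bezout_domain TYPE('a)"
    and nz: "i0 < dim_row A" "j0 < dim_col A" "A $$ (i0, j0) \<noteq> 0"
  shows "\<exists>\<delta> F. is_gcd_of \<delta> (entries A) \<and>
    (\<forall>i<dim_row A. \<forall>j<dim_col A. A $$ (i, j) = \<delta> * F i j) \<and>
    coprime_set ((\<lambda>(i, j). F i j) ` ({..<dim_row A} \<times> {..<dim_col A}))"
proof -
  define I where "I = {..<dim_row A} \<times> {..<dim_col A}"
  have "finite I" "(i0, j0) \<in> I" "(\<lambda>(i, j). A $$ (i, j)) (i0, j0) \<noteq> 0"
    using nz unfolding I_def by simp_all
  then obtain \<delta> x \<alpha> where \<delta>: "\<forall>p\<in>I. (\<lambda>(i, j). A $$ (i, j)) p = \<delta> * x p"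
    and \<alpha>: "(\<Sum>p\<in>I. \<alpha> p * x p) = 1"
    by (blast dest: bezout_primitive_factor[OF bez])
  have "is_gcd_of \<delta> ((\<lambda>(i, j). A $$ (i, j)) ` I)"
    by (rule is_gcd_of_factor[OF _ \<alpha>]) (use \<delta> in blast)
  moreover have "coprime_set ((\<lambda>(i, j). curry x i j) ` I)"
    using coprime_set_if_lincomb_eq_1[OF \<alpha>] by simp
  moreover have "\<forall>i<dim_row A. \<forall>j<dim_col A. A $$ (i, j) = \<delta> * curry x i j"
    using \<delta> unfolding I_def by auto
  ultimately show ?thesis unfolding entries_eq_image I_def by blast
qed

lemma stable_range_15_imp_gcd_row:
  fixes A :: "'a::idom mat"
  assumes bez: "bezout_domain TYPE('a)" and sr: "stable_range_15 TYPE('a)"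
    and rank: "1 < minor_rank A"
  shows "\<exists>u. dim_vec u = dim_row A \<and> u $ 0 = 1 \<and>
    (\<exists>d. is_gcd_of d (entries A) \<and> is_gcd_of d {row_times_mat u A $ j | j. j < dim_col A})"
proof -
  define n m where "n = dim_row A" and "m = dim_col A"
  obtain i1 i2 j1 j2 where minor: "i1 < n" "i2 < n" "j1 < m" "j2 < m"
    "A $$ (i1, j1) * A $$ (i2, j2) \<noteq> A $$ (i1, j2) * A $$ (i2, j1)"
    using minor_rank_gt_1_imp_2x2_minor[OF rank] unfolding n_def m_def by blast
  then obtain j0 where "j0 < m" "A $$ (i1, j0) \<noteq> 0" by (cases "A $$ (i1, j1) = 0") auto
  then obtain \<delta> F where \<delta>: "is_gcd_of \<delta> (entries A)"
    and AF: "\<forall>i<n. \<forall>j<m. A $$ (i, j) = \<delta> * F i j"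
    and F: "coprime_set ((\<lambda>(i, j). F i j) ` ({..<n} \<times> {..<m}))"
    using matrix_gcd_factor[OF bez] minor(1) unfolding n_def m_def by blast
  have "F i1 j1 * F i2 j2 \<noteq> F i1 j2 * F i2 j1"
    using minor AF by (auto simp: algebra_simps)
  then obtain u where u: "u 0 = 1" "coprime_set ((\<lambda>k. \<Sum>i<n. u i * F i k) ` {..<m})"
    using stable_range_15_row_combination[OF bez sr finite_lessThan F] minor(1-4) by blast
  obtain \<beta> where \<beta>: "(\<Sum>k<m. \<beta> k * (\<Sum>i<n. u i * F i k)) = 1"
    using bezout_coprime_set_lincomb[OF bez finite_lessThan u(2)] by blast
  have row: "row_times_mat (vec n u) A $ k = \<delta> * (\<Sum>i<n. u i * F i k)" if "k \<in> {..<m}" for k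
  proof -
    have "row_times_mat (vec n u) A $ k = (\<Sum>i<n. u i * A $$ (i, k))"
      unfolding row_times_mat_def using that by (simp add: n_def m_def)
    also have "\<dots> = \<delta> * (\<Sum>i<n. u i * F i k)"
      unfolding sum_distrib_left by (rule sum.cong) (use AF that in simp_all)
    finally show ?thesis .
  qed
  have "is_gcd_of \<delta> ((\<lambda>j. row_times_mat (vec n u) A $ j) ` {..<m})"
    by (rule is_gcd_of_factor[OF row \<beta>])
  moreover have "(\<lambda>j. row_times_mat (vec n u) A $ j) ` {..<m} = {row_times_mat (vec n u) A $ j | j. j < m}"
    by auto
  ultimately have "is_gcd_of \<delta> {row_times_mat (vec n u) A $ j | j. j < m}" by simp
  moreover have "dim_vec (vec n u) = n" "vec n u $ 0 = 1" using u(1) minor(1) by auto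
  ultimately show ?thesis using \<delta> unfolding n_def m_def by blast
qed

lemma gcd_row_imp_stable_range_15:
  assumes bez: "bezout_domain TYPE('a::idom)"
    and gcd_row: "\<forall>A :: 'a mat. 1 < minor_rank A \<longrightarrow> (\<exists>u. dim_vec u = dim_row A \<and> u $ 0 = 1 \<and>
       (\<exists>d. is_gcd_of d (entries A) \<and> is_gcd_of d {row_times_mat u A $ j | j. j < dim_col A}))"
  shows "stable_range_15 TYPE('a)"
  unfolding bezout_stable_range_15_iff[OF bez]
proof (intro allI impI)
  fix a b c :: 'a assume c: "c \<noteq> 0" and cop: "coprime_set {a, b, c}"
  show "\<exists>r. coprime_set {a + b * r, c}"
  proof (cases "a = 0")
    case True
    then have "coprime_set {a + b * 1, c}" using cop by (auto simp: coprime_set_def)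
    then show ?thesis by blast
  next
    case False
    \<comment> \<open>the row \<open>(1, r)\<close> maps \<open>[[a, 0], [b, c]]\<close> to \<open>(a + b * r, r * c)\<close>\<close>
    define A :: "'a mat" where
      "A = mat 2 2 (\<lambda>(i, j). if i = 0 then (if j = 0 then a else 0) else (if j = 0 then b else c))"
    have A: "A \<in> carrier_mat 2 2" unfolding A_def by simp
    have "det A = prod_list (diag_mat A)"
      by (rule det_lower_triangular[OF _ A]) (auto simp: A_def)
    also have "\<dots> = a * c" using A unfolding prod_list_diag_prod
      by (simp add: A_def eval_nat_numeral atLeast0_lessThan_Suc)
    finally have "2 \<le> minor_rank A" using minor_rank_ge_dim[OF A] False c by simp
    then obtain u d where u: "dim_vec u = 2" "u $ 0 = 1" and d: "is_gcd_of d (entries A)"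
      "is_gcd_of d {row_times_mat u A $ j | j. j < 2}"
      using gcd_row[rule_format, of A] A by auto
    have "A $$ (0, 0) = a" "A $$ (1, 0) = b" "A $$ (1, 1) = c" unfolding A_def by simp_all
    then have "{a, b, c} \<subseteq> entries A" using A unfolding entries_def by force
    then have "d dvd 1" using is_gcd_of_unit_iff[OF d(1)] cop coprime_set_mono by blast
    then have row_cop: "coprime_set {row_times_mat u A $ j | j. j < 2}"
      using is_gcd_of_unit_iff[OF d(2)] by blast
    have row: "row_times_mat u A $ 0 = a + b * u $ 1" "row_times_mat u A $ 1 = u $ 1 * c"
      using u(2) unfolding row_times_mat_def A_def by (simp_all add: numeral_2_eq_2 ac_simps)
    have "coprime_set {a + b * u $ 1, c}"
    proof (rule coprime_setI)
      fix e assume "\<And>s. s \<in> {a + b * u $ 1, c} \<Longrightarrow> e dvd s"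
      then have "e dvd row_times_mat u A $ j" if "j < 2" for j
        using that row by (auto simp: less_2_cases_iff)
      then show "e dvd 1" using row_cop by (auto intro: coprime_setD)
    qed
    then show ?thesis by blast
  qed
qed

theorem theorem2p21:
  assumes "bezout_domain TYPE('a::idom)"
  shows "stable_range_15 TYPE('a) \<longleftrightarrow>
    (\<forall>A :: 'a mat. minor_rank A > 1 \<longrightarrow>
       (\<exists>u. dim_vec u = dim_row A \<and> u $ 0 = 1 \<and>
          (\<exists>d. is_gcd_of d (entries A) \<and>
               is_gcd_of d {row_times_mat u A $ j | j. j < dim_col A})))"
  using stable_range_15_imp_gcd_row[OF assms] gcd_row_imp_stable_range_15[OF assms] by blast

end
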